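(* Consider the stochastic bipartite matching model described in the context, under the stability condition, with stationary distribution $\pi$. Fix $i\in\mathcal{I}$, and for $\mathcal{A}\in\mathcal{J}_0$ define $\ell_i(\mathcal{A})=\sum_{(c,d)\in\Pi_{\mathcal{A}}}|c|_i\,\pi(c,d)$ (so that $\ell_i(\mathcal{A})/\pi(\mathcal{A})$ is the stationary mean number of unmatched class-$i$ customers given that the set of unmatched classes is $\mathcal{A}$), with the convention $\ell_i(\mathcal{A})=0$ if $\mathcal{A}\notin\mathcal{J}_0$. Then the stationary mean number of unmatched class-$i$ customers is $L_i=\sum_{\mathcal{A}\in\mathcal{J}_0}\ell_i(\mathcal{A})$, we have $\ell_i(\mathcal{A})=0$ whenever $i\notin\mathcal{A}$, and for each $\mathcal{A}\in\mathcal{J}$ with $i\in\mathcal{A}$, \[ \begin{aligned} \Delta(\mathcal{A})\,\ell_i(\mathcal{A}) ={}& \lambda_i\,\mu(\mathcal{A}\cap\mathcal{K})\big(\pi(\mathcal{A})+\pi(\mathcal{A}\setminus\{i\})\big) + \lambda_i\sum_{k\in\mathcal{A}\cap\mathcal{K}}\mu_k\big(\pi(\mathcal{A}\setminus\{k\})+\pi(\mathcal{A}\setminus\{i,k\})\big)\\ &+\mu(\mathcal{A}\cap\mathcal{K})\sum_{j\in\mathcal{A}\cap\mathcal{I}}\lambda_j\,\ell_i(\mathcal{A}\setminus\{j\}) + \lambda(\mathcal{A}\cap\mathcal{I})\sum_{k\in\mathcal{A}\cap\mathcal{K}}\mu_k\,\ell_i(\mathcal{A}\setminus\{k\})\\ &+\sum_{j\in\mathcal{A}\cap\mathcal{I}}\sum_{k\in\mathcal{A}\cap\mathcal{K}}\lambda_j\mu_k\,\ell_i(\mathcal{A}\setminus\{j,k\}).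 \end{aligned} \]
   Context: Let $\mathcal{I}$ (customer classes) and $\mathcal{K}$ (server classes) be disjoint finite non-empty sets, and consider a connected bipartite graph (the compatibility graph) on $\mathcal{I}\cup\mathcal{K}$ whose edges all join an element of $\mathcal{I}$ to an element of $\mathcal{K}$; write $i\sim k$ if $i\in\mathcal{I}$ and $k\in\mathcal{K}$ are adjacent and $i\nsim k$ otherwise. For $i\in\mathcal{I}$ let $\mathcal{K}_i=\{k\in\mathcal{K}: i\sim k\}$ and for $k\in\mathcal{K}$ let $\mathcal{I}_k=\{i\in\mathcal{I}: i\sim k\}$. Let $\lambda_i>0$ ($i\in\mathcal{I}$) and $\mu_k>0$ ($k\in\mathcal{K}$) with $\sum_i\lambda_i=\sum_k\mu_k=1$. For $\mathcal{A}\subseteq\mathcal{I}$ write $\lambda(\mathcal{A})=\sum_{i\in\mathcal{A}}\lambda_i$ and $\mathcal{K}(\mathcal{A})=\bigcup_{i\in\mathcal{A}}\mathcal{K}_i$; for $\mathcal{A}\subseteq\mathcal{K}$ write $\mu(\mathcal{A})=\sum_{k\in\mathcal{A}}\mu_k$ and $\mathcal{I}(\mathcal{A})=\bigcup_{k\in\mathcal{A}}\mathcal{I}_k$. Model: time is slotted; in each slot exactly one customer and one server arrive, the customer being of class $i$ with probability $\lambda_i$ and the server of class $k$ with probability $\mu_k$, independently within and across slots. Unmatched customers and unmatched servers wait in two queues in arrival order. Upon each arrival (first-come-first-matched policy): (1) the incoming customer is matched with the longest-waiting compatible unmatched server, if any; (2) the incoming server is matched with the longest-waiting compatible unmatched customer,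 if any; (3) if neither can be matched with a waiting item, they are matched with each other if compatible; (4) any incoming item still unmatched is appended to the back of its queue. Matched items leave immediately. The state is $(c,d)$ with $c=(c_1,\dots,c_n)$ the classes of unmatched customers and $d=(d_1,\dots,d_n)$ the classes of unmatched servers, in arrival order (the two lengths are always equal); the state space is $\Pi=\bigcup_{n\ge0}\{(c,d)\in\mathcal{I}^n\times\mathcal{K}^n: c_p\nsim d_q\ \forall p,q\}$, and $\varnothing$ denotes the empty state. For a sequence $c$, $|c|_i$ is the number of occurrences of $i$ in $c$. Stability condition (assumed): $\lambda(\mathcal{A})<\mu(\mathcal{K}(\mathcal{A}))$ for every non-empty $\mathcal{A}\subsetneq\mathcal{I}$ (equivalently $\mu(\mathcal{A})<\lambda(\mathcal{I}(\mathcal{A}))$ for every non-empty $\mathcal{A}\subsetneq\mathcal{K}$). Then the Markov chain of states is ergodic with stationary distribution $\pi(c,d)=\pi(\varnothing)\prod_{p=1}^n \frac{\lambda_{c_p}}{\mu(\mathcal{K}(\{c_1,\dots,c_p\}))}\frac{\mu_{d_p}}{\lambda(\mathcal{I}(\{d_1,\dots,d_p\}))}$, $(c,d)\in\Pi$. Let $\mathcal{J}$ be the family of independent sets $\mathcal{A}\subseteq\mathcal{I}\cup\mathcal{K}$ of the compatibility graph such that $\mathcal{A}\cap\mathcal{I}$ and $\mathcal{A}\cap\mathcal{K}$ are both non-empty, and $\mathcal{J}_0=\mathcal{J}\cup\{\emptyset\}$. For $\mathcal{A}\in\mathcal{J}_0$, let $\Pi_{\mathcal{A}}$ be the set of $(c,d)\in\Pi$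 with $\{c_1,\dots,c_n\}=\mathcal{A}\cap\mathcal{I}$ and $\{d_1,\dots,d_n\}=\mathcal{A}\cap\mathcal{K}$, and $\pi(\mathcal{A})=\sum_{(c,d)\in\Pi_{\mathcal{A}}}\pi(c,d)$; by convention $\pi(\mathcal{A})=0$ if $\mathcal{A}\notin\mathcal{J}_0$. For $\mathcal{A}\in\mathcal{J}$, $\Delta(\mathcal{A})=\mu(\mathcal{K}(\mathcal{A}\cap\mathcal{I}))\,\lambda(\mathcal{I}(\mathcal{A}\cap\mathcal{K}))-\lambda(\mathcal{A}\cap\mathcal{I})\,\mu(\mathcal{A}\cap\mathcal{K})$. *)

theory Defs
  imports "HOL-Analysis.Analysis"
begin

text \<open>Customer classes I and server classes K are disjoint finite subsets of a common
  type 'a. The compatibility graph is given by a relation E, where E i k means i \<sim> k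
  (i a customer class, k a server class).\<close>

definition Kset :: "'a set \<Rightarrow> ('a \<Rightarrow> 'a \<Rightarrow> bool) \<Rightarrow> 'a set \<Rightarrow> 'a set" where
  "Kset K E A = {k \<in> K. \<exists>i\<in>A. E i k}"

definition Iset :: "'a set \<Rightarrow> ('a \<Rightarrow> 'a \<Rightarrow> bool) \<Rightarrow> 'a set \<Rightarrow> 'a set" where
  "Iset I E A = {i \<in> I. \<exists>k\<in>A. E i k}"

definition graph_connected :: "'a set \<Rightarrow> 'a set \<Rightarrow> ('a \<Rightarrow> 'a \<Rightarrow> bool) \<Rightarrow> bool" where
  "graph_connected I K E \<longleftrightarrow>
     (\<forall>x\<in>I \<union> K. \<forall>y\<in>I \<union> K. (\<lambda>u v. E u v \<or> E v u)\<^sup>*\<^sup>* x y)"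

text \<open>State space: pairs of equal-length sequences of unmatched customer / server classes,
  no customer compatible with any server.\<close>
definition states :: "'a set \<Rightarrow> 'a set \<Rightarrow> ('a \<Rightarrow> 'a \<Rightarrow> bool) \<Rightarrow> ('a list \<times> 'a list) set" where
  "states I K E = {(c, d). length c = length d \<and> set c \<subseteq> I \<and> set d \<subseteq> K \<and>
                          (\<forall>p\<in>set c. \<forall>q\<in>set d. \<not> E p q)}"

definition weight :: "'a set \<Rightarrow> 'a set \<Rightarrow> ('a \<Rightarrow> 'a \<Rightarrow> bool) \<Rightarrow> ('a \<Rightarrow> real) \<Rightarrow> ('a \<Rightarrow> real)
                      \<Rightarrow> 'a list \<times> 'a list \<Rightarrow> real" where
  "weight I K E lam mu cd = (case cd of (c, d) \<Rightarrow>
     (\<Prod>p<length c. lam (c ! p) / sum mu (Kset K E (set (take (Suc p) c)))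
                   * (mu (d ! p) / sum lam (Iset I E (set (take (Suc p) d))))))"

text \<open>Stationary distribution: the product form, normalised (so pi of the empty state is the
  normalising constant); zero outside the state space.\<close>
definition pi_st :: "'a set \<Rightarrow> 'a set \<Rightarrow> ('a \<Rightarrow> 'a \<Rightarrow> bool) \<Rightarrow> ('a \<Rightarrow> real) \<Rightarrow> ('a \<Rightarrow> real)
                      \<Rightarrow> 'a list \<times> 'a list \<Rightarrow> real" where
  "pi_st I K E lam mu cd =
     (if cd \<in> states I K E
      then weight I K E lam mu cd / (\<Sum>\<^sub>\<infinity>x\<in>states I K E. weight I K E lam mu x)
      else 0)"

definition Jfam :: "'a set \<Rightarrow> 'a set \<Rightarrow> ('a \<Rightarrow> 'a \<Rightarrow> bool) \<Rightarrow> 'a set set" where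
  "Jfam I K E = {A. A \<subseteq> I \<union> K \<and> (\<forall>i\<in>A \<inter> I. \<forall>k\<in>A \<inter> K. \<not> E i k) \<and>
                    A \<inter> I \<noteq> {} \<and> A \<inter> K \<noteq> {}}"

definition J0fam :: "'a set \<Rightarrow> 'a set \<Rightarrow> ('a \<Rightarrow> 'a \<Rightarrow> bool) \<Rightarrow> 'a set set" where
  "J0fam I K E = insert {} (Jfam I K E)"

definition states_of :: "'a set \<Rightarrow> 'a set \<Rightarrow> ('a \<Rightarrow> 'a \<Rightarrow> bool) \<Rightarrow> 'a set \<Rightarrow> ('a list \<times> 'a list) set" where
  "states_of I K E A = {(c, d) \<in> states I K E. set c = A \<inter> I \<and> set d = A \<inter> K}"

definition pi_set :: "'a set \<Rightarrow> 'a set \<Rightarrow> ('a \<Rightarrow> 'a \<Rightarrow> bool) \<Rightarrow> ('a \<Rightarrow> real) \<Rightarrow> ('a \<Rightarrow> real)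
                      \<Rightarrow> 'a set \<Rightarrow> real" where
  "pi_set I K E lam mu A =
     (if A \<in> J0fam I K E then (\<Sum>\<^sub>\<infinity>x\<in>states_of I K E A. pi_st I K E lam mu x) else 0)"

definition ell :: "'a set \<Rightarrow> 'a set \<Rightarrow> ('a \<Rightarrow> 'a \<Rightarrow> bool) \<Rightarrow> ('a \<Rightarrow> real) \<Rightarrow> ('a \<Rightarrow> real)
                      \<Rightarrow> 'a \<Rightarrow> 'a set \<Rightarrow> real" where
  "ell I K E lam mu i A =
     (if A \<in> J0fam I K E
      then (\<Sum>\<^sub>\<infinity>x\<in>states_of I K E A. real (count_list (fst x) i) * pi_st I K E lam mu x)
      else 0)"

definition meanL :: "'a set \<Rightarrow> 'a set \<Rightarrow> ('a \<Rightarrow> 'a \<Rightarrow> bool) \<Rightarrow> ('a \<Rightarrow> real) \<Rightarrow> ('a \<Rightarrow> real)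
                      \<Rightarrow> 'a \<Rightarrow> real" where
  "meanL I K E lam mu i =
     (\<Sum>\<^sub>\<infinity>x\<in>states I K E. real (count_list (fst x) i) * pi_st I K E lam mu x)"

definition Delta :: "'a set \<Rightarrow> 'a set \<Rightarrow> ('a \<Rightarrow> 'a \<Rightarrow> bool) \<Rightarrow> ('a \<Rightarrow> real) \<Rightarrow> ('a \<Rightarrow> real)
                      \<Rightarrow> 'a set \<Rightarrow> real" where
  "Delta I K E lam mu A =
     sum mu (Kset K E (A \<inter> I)) * sum lam (Iset I E (A \<inter> K))
     - sum lam (A \<inter> I) * sum mu (A \<inter> K)"

end

theory Submission
  imports Defs
begin

(* Every state whose set of unmatched classes is A (with A in J) arises in exactly one way by
   appending a customer j in A and a server k in A to a shorter state, whose set of unmatched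
   classes lies between A - {j, k} and A; by the product form this multiplies pi by
   lam j * mu k / (mu (K (A \<inter> I)) * lam (I (A \<inter> K))). Summing |c|_i * pi (c, d) over the
   states with classes A thus expresses mu (K (A \<inter> I)) * lam (I (A \<inter> K)) * ell_i A through ell_i
   and pi on the sets between A - {j, k} and A; the terms for A itself add up to
   lam (A \<inter> I) * mu (A \<inter> K) * ell_i A, and moving them to the left produces Delta A.
   The sums are infinite, so the identity is first proved for states of bounded length. As
   Delta A > 0 by the stability condition, it bounds these truncated sums by induction on |A|,
   which gives summability, and the identity then passes to the limit. *)

lemma nonneg_summable_on_exhaustion:
  fixes h :: "'b \<Rightarrow> real"
  assumes nonneg: "\<And>x. x \<in> X \<Longrightarrow> 0 \<le> h x" and fin: "\<And>N. finite (T N)"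
    and sub: "\<And>N. T N \<subseteq> X" and exhaust: "\<And>F. finite F \<Longrightarrow> F \<subseteq> X \<Longrightarrow> \<exists>N. F \<subseteq> T N"
    and bound: "\<And>N. sum h (T N) \<le> C"
  shows "h summable_on X"
proof (rule nonneg_bdd_above_summable_on)
  show "bdd_above (sum h ` {F. F \<subseteq> X \<and> finite F})"
  proof (rule bdd_aboveI2)
    fix F assume F: "F \<in> {F. F \<subseteq> X \<and> finite F}"
    then obtain N where N: "F \<subseteq> T N" using exhaust by blast
    have "sum h F \<le> sum h (T N)"
      using nonneg sub N fin by (intro sum_mono2) auto
    then show "sum h F \<le> C" using bound order_trans by blast
  qed
qed (fact nonneg)

lemma filterlim_exhaustion_finite_subsets:
  fixes T :: "nat \<Rightarrow> 'b set"
  assumes mono: "mono T" and fin: "\<And>N. finite (T N)" and sub: "\<And>N. T N \<subseteq> X"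
    and exhaust: "\<And>F. finite F \<Longrightarrow> F \<subseteq> X \<Longrightarrow> \<exists>N. F \<subseteq> T N"
  shows "filterlim T (finite_subsets_at_top X) sequentially"
  unfolding filterlim_def le_filter_def eventually_filtermap
proof (intro allI impI)
  fix Q assume "eventually Q (finite_subsets_at_top X)"
  then obtain F where F: "finite F" "F \<subseteq> X"
    and Q: "\<And>Y. finite Y \<and> F \<subseteq> Y \<and> Y \<subseteq> X \<Longrightarrow> Q Y"
    unfolding eventually_finite_subsets_at_top by blast
  obtain N where N: "F \<subseteq> T N" using exhaust F by blast
  show "eventually (\<lambda>N. Q (T N)) sequentially"
  proof (rule eventually_sequentiallyI)
    fix M assume "N \<le> M"
    then have "F \<subseteq> T M" using N monoD[OF mono] by blast
    then show "Q (T M)" using Q fin sub by blast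
  qed
qed

lemma interval_Diff2_eq:
  assumes "j \<in> A" and "k \<in> A"
  shows "{A - {j, k}..A} = {A, A - {j}, A - {k}, A - {j, k}}"
proof (intro equalityI subsetI)
  fix B assume "B \<in> {A - {j, k}..A}"
  then have B: "A - {j, k} \<subseteq> B" "B \<subseteq> A" by simp_all
  show "B \<in> {A, A - {j}, A - {k}, A - {j, k}}"
  proof (cases "j \<in> B"; cases "k \<in> B")
    assume "j \<in> B" "k \<in> B" then have "B = A" using B by blast then show ?thesis by blast
  next
    assume "j \<in> B" "k \<notin> B" then have "B = A - {k}" using B by blast then show ?thesis by blast
  next
    assume "j \<notin> B" "k \<in> B" then have "B = A - {j}" using B by blast then show ?thesis by blast
  next
    assume "j \<notin> B" "k \<notin> B" then have "B = A - {j, k}" using B by blast then show ?thesis by blast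
  qed
qed auto

lemma sum_interval_Diff2:
  fixes f :: "'a set \<Rightarrow> 'b::comm_monoid_add"
  assumes "j \<in> A" and "k \<in> A" and "j \<noteq> k"
  shows "(\<Sum>B\<in>{A - {j, k}..A}. f B) = f A + f (A - {j}) + f (A - {k}) + f (A - {j, k})"
proof -
  have "A \<notin> {A - {j}, A - {k}, A - {j, k}}" "A - {j} \<notin> {A - {k}, A - {j, k}}"
    "A - {k} \<notin> {A - {j, k}}"
    using assms by blast+
  then show ?thesis
    unfolding interval_Diff2_eq[OF assms(1,2)]
    by (simp only: sum.insert finite.insertI finite.emptyI sum.empty empty_iff add_0_right add.assoc
        not_False_eq_True)
qed

lemma double_sum_interval_Diff2:
  fixes lam mu :: "'a \<Rightarrow> real" and m q :: "'a set \<Rightarrow> real"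
  assumes "finite S" and "S \<subseteq> A" and "T \<subseteq> A" and "S \<inter> T = {}" and "i \<in> S"
  shows "(\<Sum>j\<in>S. \<Sum>k\<in>T. lam j * mu k * (\<Sum>B\<in>{A - {j, k}..A}. m B + of_bool (j = i) * q B)) =
      sum lam S * sum mu T * m A
    + lam i * sum mu T * (q A + q (A - {i}))
    + lam i * (\<Sum>k\<in>T. mu k * (q (A - {k}) + q (A - {i, k})))
    + sum mu T * (\<Sum>j\<in>S. lam j * m (A - {j}))
    + sum lam S * (\<Sum>k\<in>T. mu k * m (A - {k}))
    + (\<Sum>j\<in>S. \<Sum>k\<in>T. lam j * mu k * m (A - {j, k}))"
proof -
  have "(\<Sum>B\<in>{A - {j, k}..A}. m B + of_bool (j = i) * q B) =
      m A + m (A - {j}) + m (A - {k}) + m (A - {j, k})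
    + of_bool (j = i) * (q A + q (A - {j}) + q (A - {k}) + q (A - {j, k}))"
    if "j \<in> S" "k \<in> T" for j k
  proof -
    have jk: "j \<in> A" "k \<in> A" "j \<noteq> k" using that assms(2-4) by blast+
    show ?thesis
      unfolding sum.distrib sum_distrib_left[symmetric] sum_interval_Diff2[OF jk] ..
  qed
  then have "(\<Sum>j\<in>S. \<Sum>k\<in>T. lam j * mu k * (\<Sum>B\<in>{A - {j, k}..A}. m B + of_bool (j = i) * q B)) =
      (\<Sum>j\<in>S. \<Sum>k\<in>T. lam j * mu k * m A) + (\<Sum>j\<in>S. \<Sum>k\<in>T. lam j * mu k * m (A - {j}))
    + (\<Sum>j\<in>S. \<Sum>k\<in>T. lam j * mu k * m (A - {k})) + (\<Sum>j\<in>S. \<Sum>k\<in>T. lam j * mu k * m (A - {j, k}))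
    + (\<Sum>j\<in>S. \<Sum>k\<in>T. lam j * mu k *
        (of_bool (j = i) * (q A + q (A - {j}) + q (A - {k}) + q (A - {j, k}))))"
    by (simp only: distrib_left sum.distrib cong: sum.cong)
  also have "(\<Sum>j\<in>S. \<Sum>k\<in>T. lam j * mu k *
        (of_bool (j = i) * (q A + q (A - {j}) + q (A - {k}) + q (A - {j, k})))) =
      (\<Sum>j\<in>S. if j = i then (\<Sum>k\<in>T. lam i * mu k * (q A + q (A - {i}) + q (A - {k}) + q (A - {i, k}))) else 0)"
    by (intro sum.cong) auto
  also have "\<dots> = (\<Sum>k\<in>T. lam i * mu k * (q A + q (A - {i}) + q (A - {k}) + q (A - {i, k})))"
    using assms(1,5) by simp
  also have "\<dots> = lam i * sum mu T * (q A + q (A - {i})) + lam i * (\<Sum>k\<in>T. mu k * (q (A - {k}) + q (A - {i, k})))"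
    by (simp add: sum_distrib_left sum_distrib_right sum.distrib algebra_simps)
  also have "(\<Sum>j\<in>S. \<Sum>k\<in>T. lam j * mu k * m A) = sum lam S * sum mu T * m A"
    by (simp add: sum_product sum_distrib_right[symmetric])
  also have "(\<Sum>j\<in>S. \<Sum>k\<in>T. lam j * mu k * m (A - {j})) = sum mu T * (\<Sum>j\<in>S. lam j * m (A - {j}))"
    by (simp add: sum_distrib_left sum_distrib_right mult_ac)
  also have "(\<Sum>j\<in>S. \<Sum>k\<in>T. lam j * mu k * m (A - {k})) = sum lam S * (\<Sum>k\<in>T. mu k * m (A - {k}))"
    by (simp add: sum_product mult_ac)
  finally show ?thesis by linarith
qed

definition extend_state :: "'a \<Rightarrow> 'a \<Rightarrow> 'a list \<times> 'a list \<Rightarrow> 'a list \<times> 'a list" where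
  "extend_state j k x = (fst x @ [j], snd x @ [k])"

lemma extend_state_eq_iff [simp]:
  "extend_state j k x = extend_state j' k' x' \<longleftrightarrow> j = j' \<and> k = k' \<and> x = x'"
  by (auto simp: extend_state_def prod_eq_iff)

lemma count_extend_state:
  "count_list (fst (extend_state j k x)) i = count_list (fst x) i + of_bool (j = i)"
  by (simp add: extend_state_def)

lemma states_of_iff:
  "(c, d) \<in> states_of I K E A \<longleftrightarrow>
     length c = length d \<and> set c = A \<inter> I \<and> set d = A \<inter> K \<and> (\<forall>p\<in>set c. \<forall>q\<in>set d. \<not> E p q)"
  by (auto simp: states_of_def states_def)

lemma weight_extend_state:
  assumes "length (fst x) = length (snd x)"
  shows "weight I K E lam mu (extend_state j k x) = weight I K E lam mu x *
    (lam j / sum mu (Kset K E (set (fst x @ [j]))) * (mu k / sum lam (Iset I E (set (snd x @ [k])))))"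
proof -
  obtain c d where x: "x = (c, d)" by fastforce
  have "(\<Prod>p<length c. lam ((c @ [j]) ! p) / sum mu (Kset K E (set (take (Suc p) (c @ [j]))))
          * (mu ((d @ [k]) ! p) / sum lam (Iset I E (set (take (Suc p) (d @ [k]))))))
      = (\<Prod>p<length c. lam (c ! p) / sum mu (Kset K E (set (take (Suc p) c)))
          * (mu (d ! p) / sum lam (Iset I E (set (take (Suc p) d)))))"
    using assms x by (intro prod.cong) (auto simp: nth_append)
  then show ?thesis
    using assms x by (simp add: weight_def extend_state_def prod.lessThan_Suc nth_append)
qed

lemma states_of_subset: "states_of I K E A \<subseteq> states I K E"
  by (auto simp: states_of_def)

lemma ell_eq_0_if_not_mem:
  assumes "i \<notin> A"
  shows "ell I K E lam mu i A = 0"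
proof -
  have "count_list (fst x) i = 0" if "x \<in> states_of I K E A" for x
    using that assms by (auto simp: states_of_def count_list_0_iff)
  then show ?thesis
    by (simp add: ell_def infsum_0)
qed

locale matching_model =
  fixes I K :: "'a set" and E :: "'a \<Rightarrow> 'a \<Rightarrow> bool" and lam mu :: "'a \<Rightarrow> real"
  assumes finite_I: "finite I" and finite_K: "finite K"
    and I_nonempty: "I \<noteq> {}" and K_nonempty: "K \<noteq> {}" and disjoint_I_K: "I \<inter> K = {}"
    and edge_bipartite: "\<And>x y. E x y \<Longrightarrow> x \<in> I \<and> y \<in> K"
    and connected: "graph_connected I K E"
    and lam_pos: "\<And>j. j \<in> I \<Longrightarrow> lam j > 0"
    and mu_pos: "\<And>k. k \<in> K \<Longrightarrow> mu k > 0"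
    and lam_sum: "sum lam I = 1" and mu_sum: "sum mu K = 1"
    and stability: "\<And>A. A \<noteq> {} \<Longrightarrow> A \<subset> I \<Longrightarrow> sum lam A < sum mu (Kset K E A)"
begin

abbreviation \<pi> :: "'a list \<times> 'a list \<Rightarrow> real" where
  "\<pi> \<equiv> pi_st I K E lam mu"

abbreviation states_on :: "'a set \<Rightarrow> ('a list \<times> 'a list) set" where
  "states_on A \<equiv> states_of I K E A"

lemma lam_nonneg: "j \<in> I \<Longrightarrow> 0 \<le> lam j"
  using lam_pos by (simp add: less_imp_le)

lemma mu_nonneg: "k \<in> K \<Longrightarrow> 0 \<le> mu k"
  using mu_pos by (simp add: less_imp_le)

lemma has_neighbour:
  assumes "x \<in> I \<union> K"
  shows "\<exists>y. E x y \<or> E y x"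
proof -
  obtain z where z: "z \<in> I \<union> K" "z \<noteq> x"
    using I_nonempty K_nonempty disjoint_I_K assms by blast
  then have "(\<lambda>u v. E u v \<or> E v u)\<^sup>*\<^sup>* x z"
    using connected assms unfolding graph_connected_def by blast
  then show ?thesis
    using z(2) by (induction rule: converse_rtranclp_induct) auto
qed

lemma customer_has_edge: "j \<in> I \<Longrightarrow> \<exists>k. E j k"
  using has_neighbour edge_bipartite disjoint_I_K by blast

lemma server_has_edge: "k \<in> K \<Longrightarrow> \<exists>j. E j k"
  using has_neighbour edge_bipartite disjoint_I_K by blast

lemma server_stability:
  assumes "B \<noteq> {}" and "B \<subset> K"
  shows "sum mu B < sum lam (Iset I E B)"
proof -
  define C where "C = I - Iset I E B"
  have IB: "Iset I E B \<subseteq> I" by (auto simp: Iset_def)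
  have lam_C: "sum lam C = 1 - sum lam (Iset I E B)"
    using sum.subset_diff[OF IB finite_I, of lam] lam_sum unfolding C_def by simp
  have mu_B: "sum mu (K - B) = 1 - sum mu B"
    using sum.subset_diff[of B K mu] assms finite_K mu_sum by auto
  have "Iset I E B \<noteq> {}"
    using assms server_has_edge edge_bipartite unfolding Iset_def by blast
  then have "C \<noteq> I" unfolding C_def using IB by blast
  show ?thesis
  proof (cases "C = {}")
    case True
    obtain k where "k \<in> K - B" using assms by blast
    then have "0 < sum mu (K - B)"
      using finite_K mu_pos mu_nonneg by (intro sum_pos2[of _ k]) auto
    moreover have "Iset I E B = I" using True IB unfolding C_def by blast
    ultimately show ?thesis using mu_B lam_sum by simp
  next
    case False
    have "sum lam C < sum mu (Kset K E C)"
      using stability[OF False] \<open>C \<noteq> I\<close> C_def by blast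
    also have "\<dots> \<le> sum mu (K - B)"
      using finite_K mu_nonneg edge_bipartite
      by (intro sum_mono2) (auto simp: Kset_def C_def Iset_def)
    finally show ?thesis using lam_C mu_B by simp
  qed
qed

lemma Jfam_subset: "A \<in> Jfam I K E \<Longrightarrow> A \<subseteq> I \<union> K"
  by (simp add: Jfam_def)

lemma Jfam_psubset:
  assumes "A \<in> Jfam I K E"
  shows "A \<inter> I \<subset> I" and "A \<inter> K \<subset> K"
proof -
  have independent: "\<And>x y. x \<in> A \<inter> I \<Longrightarrow> y \<in> A \<inter> K \<Longrightarrow> \<not> E x y"
    using assms unfolding Jfam_def by blast
  obtain k where k: "k \<in> A \<inter> K" using assms unfolding Jfam_def by blast
  then obtain j where "E j k" using server_has_edge by blast
  then show "A \<inter> I \<subset> I" using independent k edge_bipartite by blast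
  obtain j' where j': "j' \<in> A \<inter> I" using assms unfolding Jfam_def by blast
  then obtain k' where "E j' k'" using customer_has_edge by blast
  then show "A \<inter> K \<subset> K" using independent j' edge_bipartite by blast
qed

definition neighbourhood_rate :: "'a set \<Rightarrow> real" where
  "neighbourhood_rate A = sum mu (Kset K E (A \<inter> I)) * sum lam (Iset I E (A \<inter> K))"

lemma Delta_eq: "Delta I K E lam mu A = neighbourhood_rate A - sum lam (A \<inter> I) * sum mu (A \<inter> K)"
  by (simp add: Delta_def neighbourhood_rate_def)

lemma Delta_pos:
  assumes "A \<in> Jfam I K E"
  shows "0 < Delta I K E lam mu A"
proof -
  have ne: "A \<inter> I \<noteq> {}" "A \<inter> K \<noteq> {}" using assms unfolding Jfam_def by blast+
  have "0 < sum lam (A \<inter> I)" using ne finite_I lam_pos by (intro sum_pos) auto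
  moreover have "0 < sum mu (A \<inter> K)" using ne finite_K mu_pos by (intro sum_pos) auto
  moreover have "sum lam (A \<inter> I) < sum mu (Kset K E (A \<inter> I))"
    using stability[OF ne(1) Jfam_psubset(1)[OF assms]] .
  moreover have "sum mu (A \<inter> K) < sum lam (Iset I E (A \<inter> K))"
    using server_stability[OF ne(2) Jfam_psubset(2)[OF assms]] .
  ultimately show ?thesis
    unfolding Delta_def by (simp add: mult_strict_mono)
qed

lemma neighbourhood_rate_pos:
  assumes "A \<in> Jfam I K E"
  shows "0 < neighbourhood_rate A"
proof -
  have "0 \<le> sum lam (A \<inter> I) * sum mu (A \<inter> K)"
    using lam_nonneg mu_nonneg by (intro mult_nonneg_nonneg sum_nonneg) auto
  then show ?thesis using Delta_pos[OF assms] Delta_eq[of A] by linarith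
qed

lemma weight_nonneg:
  assumes "x \<in> states I K E"
  shows "0 \<le> weight I K E lam mu x"
proof -
  obtain c d where x: "x = (c, d)" by fastforce
  have "0 \<le> lam (c ! p) / sum mu (Kset K E (set (take (Suc p) c)))
      * (mu (d ! p) / sum lam (Iset I E (set (take (Suc p) d))))" if "p < length c" for p
  proof -
    have "c ! p \<in> I" "d ! p \<in> K"
      using that assms x nth_mem unfolding states_def by fastforce+
    then show ?thesis
      by (intro mult_nonneg_nonneg divide_nonneg_nonneg sum_nonneg)
        (auto simp: Kset_def Iset_def lam_nonneg mu_nonneg)
  qed
  then show ?thesis
    unfolding weight_def x case_prod_conv by (intro prod_nonneg) simp
qed

lemma pi_nonneg: "0 \<le> \<pi> x"
  unfolding pi_st_def using weight_nonneg by (simp add: infsum_nonneg)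

lemma pi_extend_state:
  assumes A: "A \<in> Jfam I K E" and x: "x \<in> states I K E"
    and ext: "extend_state j k x \<in> states_on A"
  shows "neighbourhood_rate A * \<pi> (extend_state j k x) = lam j * mu k * \<pi> x"
proof -
  have len: "length (fst x) = length (snd x)" using x by (auto simp: states_def)
  have "set (fst x @ [j]) = A \<inter> I" "set (snd x @ [k]) = A \<inter> K"
    using ext by (auto simp: states_of_def extend_state_def)
  then have "weight I K E lam mu (extend_state j k x) =
      weight I K E lam mu x * (lam j * mu k / neighbourhood_rate A)"
    unfolding weight_extend_state[OF len] neighbourhood_rate_def by simp
  moreover have "extend_state j k x \<in> states I K E" using ext states_of_subset by blast
  ultimately show ?thesis
    using x neighbourhood_rate_pos[OF A] by (simp add: pi_st_def)
qed

lemma states_of_disjoint: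
  assumes "A \<subseteq> I \<union> K" and "B \<subseteq> I \<union> K" and "A \<noteq> B"
  shows "states_on A \<inter> states_on B = {}"
proof -
  have "A = (A \<inter> I) \<union> (A \<inter> K)" "B = (B \<inter> I) \<union> (B \<inter> K)" using assms by auto
  then show ?thesis using assms(3) by (auto simp: states_of_def)
qed

lemma states_of_not_Jfam:
  assumes "B \<subseteq> I \<union> K" and "B \<notin> Jfam I K E"
  shows "states_on B \<subseteq> {([], [])}"
proof
  fix x assume x: "x \<in> states_on B"
  obtain c d where cd: "x = (c, d)" by fastforce
  have "B \<inter> I = {} \<or> B \<inter> K = {}" using assms x cd by (auto simp: Jfam_def states_of_iff)
  then show "x \<in> {([], [])}" using x cd by (auto simp: states_of_iff)
qed

lemma states_of_not_J0fam:
  assumes "B \<subseteq> I \<union> K" and "B \<notin> J0fam I K E"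
  shows "states_on B = {}"
proof -
  have "B \<noteq> {}" "B \<notin> Jfam I K E" using assms(2) by (auto simp: J0fam_def)
  then have "([], []) \<notin> states_on B" using assms(1) by (auto simp: states_of_iff)
  then show ?thesis using states_of_not_Jfam[OF assms(1) \<open>B \<notin> Jfam I K E\<close>] by blast
qed

lemma states_eq_UN_states_of: "states I K E = (\<Union>A\<in>J0fam I K E. states_on A)"
proof (intro equalityI subsetI)
  fix x assume x: "x \<in> states I K E"
  obtain c d where cd: "x = (c, d)" by fastforce
  have st: "length c = length d" "set c \<subseteq> I" "set d \<subseteq> K" "\<forall>p\<in>set c. \<forall>q\<in>set d. \<not> E p q"
    using x cd by (auto simp: states_def)
  define A where "A = set c \<union> set d"
  have A: "set c = A \<inter> I" "set d = A \<inter> K"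
    using st disjoint_I_K unfolding A_def by auto
  then have "x \<in> states_on A" using st cd by (simp add: states_of_iff)
  moreover have "A \<in> J0fam I K E"
  proof (cases "c = []")
    case True
    then show ?thesis using st(1) by (simp add: A_def J0fam_def)
  next
    case False
    then have "d \<noteq> []" using st(1) by auto
    moreover have "A \<subseteq> I \<union> K" using st(2,3) by (auto simp: A_def)
    ultimately show ?thesis using False st(4) by (auto simp: J0fam_def Jfam_def A[symmetric])
  qed
  ultimately show "x \<in> (\<Union>A\<in>J0fam I K E. states_on A)" by blast
next
  fix x assume "x \<in> (\<Union>A\<in>J0fam I K E. states_on A)"
  then show "x \<in> states I K E" using states_of_subset by blast
qed

lemma J0fam_subset: "A \<in> J0fam I K E \<Longrightarrow> A \<subseteq> I \<union> K"
  by (auto simp: J0fam_def Jfam_def)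

lemma finite_J0fam: "finite (J0fam I K E)"
proof (rule finite_subset)
  show "J0fam I K E \<subseteq> Pow (I \<union> K)" using J0fam_subset by blast
qed (simp add: finite_I finite_K)

definition states_upto :: "nat \<Rightarrow> 'a set \<Rightarrow> ('a list \<times> 'a list) set" where
  "states_upto N A = {x \<in> states_on A. length (fst x) \<le> N}"

lemma finite_states_upto: "finite (states_upto N A)"
proof (rule finite_subset)
  show "states_upto N A \<subseteq> {c. set c \<subseteq> I \<and> length c \<le> N} \<times> {d. set d \<subseteq> K \<and> length d \<le> N}"
    by (auto simp: states_upto_def states_of_def states_def)
  show "finite ({c. set c \<subseteq> I \<and> length c \<le> N} \<times> {d. set d \<subseteq> K \<and> length d \<le> N})"
    using finite_lists_length_le[OF finite_I] finite_lists_length_le[OF finite_K] by blast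
qed

lemma states_upto_mono: "mono (\<lambda>N. states_upto N A)"
  by (auto simp: mono_def states_upto_def)

lemma states_upto_exhaust:
  assumes "finite F" and "F \<subseteq> states_on A"
  shows "\<exists>N. F \<subseteq> states_upto N A"
proof
  show "F \<subseteq> states_upto (\<Sum>x\<in>F. length (fst x)) A"
    using assms member_le_sum[of _ F "\<lambda>x. length (fst x)"] by (auto simp: states_upto_def)
qed

lemma extend_state_mem_states_upto:
  assumes A: "A \<in> Jfam I K E" and j: "j \<in> A \<inter> I" and k: "k \<in> A \<inter> K"
    and B: "B \<in> {A - {j, k}..A}" and x: "x \<in> states_upto N B"
  shows "extend_state j k x \<in> states_upto (Suc N) A"
proof -
  obtain c d where cd: "x = (c, d)" by fastforce
  have "set c = B \<inter> I" "set d = B \<inter> K" "length c = length d" "length c \<le> N"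
    using x cd by (auto simp: states_upto_def states_of_iff)
  moreover have "j \<notin> K" "k \<notin> I" using j k disjoint_I_K by blast+
  ultimately have "set (c @ [j]) = A \<inter> I" "set (d @ [k]) = A \<inter> K"
    "length (c @ [j]) = length (d @ [k])" "length (c @ [j]) \<le> Suc N"
    using B j k by auto
  moreover have "\<forall>p\<in>A \<inter> I. \<forall>q\<in>A \<inter> K. \<not> E p q" using A by (simp add: Jfam_def)
  ultimately show ?thesis
    using cd by (simp add: states_upto_def extend_state_def states_of_iff)
qed

lemma states_upto_Suc_cases:
  assumes A: "A \<in> Jfam I K E" and y: "y \<in> states_upto (Suc N) A"
  obtains j k B x where "j \<in> A \<inter> I" and "k \<in> A \<inter> K" and "B \<in> {A - {j, k}..A}"
    and "x \<in> states_upto N B" and "y = extend_state j k x"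
proof -
  obtain c d where cd: "y = (c, d)" by fastforce
  have st: "length c = length d" "set c = A \<inter> I" "set d = A \<inter> K" "length c \<le> Suc N"
    "\<forall>p\<in>set c. \<forall>q\<in>set d. \<not> E p q"
    using y cd by (auto simp: states_upto_def states_of_iff)
  have "c \<noteq> []" "d \<noteq> []" using st(2,3) A by (auto simp: Jfam_def)
  then obtain c' j d' k where c: "c = c' @ [j]" and d: "d = d' @ [k]"
    by (metis rev_exhaust)
  define B where "B = set c' \<union> set d'"
  have "set c' = B \<inter> I" "set d' = B \<inter> K"
    using st(2,3) c d disjoint_I_K unfolding B_def by auto
  moreover have "\<forall>p\<in>set c'. \<forall>q\<in>set d'. \<not> E p q" using st(5) c d by simp
  ultimately have "(c', d') \<in> states_upto N B"
    using st(1,4) c d by (simp add: states_upto_def states_of_iff)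
  moreover have "B \<in> {A - {j, k}..A}"
    using st(2,3) c d Jfam_subset[OF A] unfolding B_def by auto
  moreover have "j \<in> A \<inter> I" "k \<in> A \<inter> K" using st(2,3) c d by auto
  ultimately show ?thesis
    using that cd c d by (simp add: extend_state_def)
qed

lemma bij_betw_extend_state:
  assumes A: "A \<in> Jfam I K E"
  shows "bij_betw (\<lambda>(jk, x). extend_state (fst jk) (snd jk) x)
    (SIGMA jk:(A \<inter> I) \<times> (A \<inter> K). \<Union>B\<in>{A - {fst jk, snd jk}..A}. states_upto N B)
    (states_upto (Suc N) A)" (is "bij_betw ?f ?S _")
proof (rule bij_betw_imageI)
  show "inj_on ?f ?S" by (rule inj_onI) auto
  show "?f ` ?S = states_upto (Suc N) A"
  proof (intro equalityI subsetI)
    fix y assume "y \<in> ?f ` ?S"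
    then obtain j k B x where "j \<in> A \<inter> I" "k \<in> A \<inter> K" "B \<in> {A - {j, k}..A}"
      "x \<in> states_upto N B" "y = extend_state j k x"
      by auto
    then show "y \<in> states_upto (Suc N) A"
      using extend_state_mem_states_upto[OF A] by blast
  next
    fix y assume "y \<in> states_upto (Suc N) A"
    then obtain j k B x where "j \<in> A \<inter> I" "k \<in> A \<inter> K" "B \<in> {A - {j, k}..A}"
      "x \<in> states_upto N B" "y = extend_state j k x"
      using states_upto_Suc_cases[OF A] by metis
    then show "y \<in> ?f ` ?S"
      by (intro image_eqI[of _ _ "((j, k), x)"]) auto
  qed
qed

lemma finite_interval_Diff2:
  assumes "A \<subseteq> I \<union> K"
  shows "finite {A - {j, k}..A}"
proof (rule finite_subset)
  have "finite A" using assms finite_I finite_K by (meson finite_Un finite_subset)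
  then show "finite (Pow A)" by simp
qed auto

definition partial_mass :: "('a list \<times> 'a list \<Rightarrow> real) \<Rightarrow> nat \<Rightarrow> 'a set \<Rightarrow> real" where
  "partial_mass \<phi> N B = (\<Sum>x\<in>states_upto N B. \<phi> x * \<pi> x)"

definition mass :: "('a list \<times> 'a list \<Rightarrow> real) \<Rightarrow> 'a set \<Rightarrow> real" where
  "mass \<phi> B = (\<Sum>\<^sub>\<infinity>x\<in>states_on B. \<phi> x * \<pi> x)"

lemma sum_states_upto_Suc:
  fixes g :: "'a list \<times> 'a list \<Rightarrow> 'b::comm_monoid_add"
  assumes A: "A \<in> Jfam I K E"
  shows "(\<Sum>y\<in>states_upto (Suc N) A. g y) =
    (\<Sum>j\<in>A \<inter> I. \<Sum>k\<in>A \<inter> K. \<Sum>B\<in>{A - {j, k}..A}. \<Sum>x\<in>states_upto N B. g (extend_state j k x))"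
proof -
  let ?U = "\<lambda>j k. \<Union>B\<in>{A - {j, k}..A}. states_upto N B"
  have sub: "B \<subseteq> I \<union> K" if "B \<in> {A - {j, k}..A}" for B j k
    using that Jfam_subset[OF A] by auto
  have fin: "finite (?U j k)" for j k
    using Jfam_subset[OF A] by (intro finite_UN_I finite_interval_Diff2 finite_states_upto)
  have union: "(\<Sum>x\<in>?U j k. f x) = (\<Sum>B\<in>{A - {j, k}..A}. \<Sum>x\<in>states_upto N B. f x)"
    for j k and f :: "'a list \<times> 'a list \<Rightarrow> 'b"
  proof (rule sum.UNION_disjoint)
    show "finite {A - {j, k}..A}" using Jfam_subset[OF A] by (rule finite_interval_Diff2)
    show "\<forall>B\<in>{A - {j, k}..A}. finite (states_upto N B)" using finite_states_upto by blast
    show "\<forall>B\<in>{A - {j, k}..A}. \<forall>B'\<in>{A - {j, k}..A}. B \<noteq> B' \<longrightarrow>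
        states_upto N B \<inter> states_upto N B' = {}"
    proof (intro ballI impI)
      fix B B' assume "B \<in> {A - {j, k}..A}" "B' \<in> {A - {j, k}..A}" "B \<noteq> B'"
      then have "states_on B \<inter> states_on B' = {}" by (intro states_of_disjoint sub)
      then show "states_upto N B \<inter> states_upto N B' = {}" unfolding states_upto_def by blast
    qed
  qed
  have "(\<Sum>y\<in>states_upto (Suc N) A. g y) =
      (\<Sum>z\<in>(SIGMA jk:(A \<inter> I) \<times> (A \<inter> K). ?U (fst jk) (snd jk)).
        g ((\<lambda>(jk, x). extend_state (fst jk) (snd jk) x) z))"
    by (rule sum.reindex_bij_betw[OF bij_betw_extend_state[OF A], symmetric])
  also have "\<dots> = (\<Sum>jk\<in>(A \<inter> I) \<times> (A \<inter> K). \<Sum>x\<in>?U (fst jk) (snd jk).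
      g (extend_state (fst jk) (snd jk) x))"
    unfolding prod.case_distrib using fin finite_I finite_K by (intro sum.Sigma[symmetric]) auto
  also have "\<dots> = (\<Sum>j\<in>A \<inter> I. \<Sum>k\<in>A \<inter> K. \<Sum>x\<in>?U j k. g (extend_state j k x))"
    by (simp only: sum.cartesian_product split_def)
  finally show ?thesis by (simp only: union)
qed

lemma partial_mass_Suc:
  assumes A: "A \<in> Jfam I K E"
  shows "neighbourhood_rate A * partial_mass \<phi> (Suc N) A =
    (\<Sum>j\<in>A \<inter> I. \<Sum>k\<in>A \<inter> K. lam j * mu k *
      (\<Sum>B\<in>{A - {j, k}..A}. partial_mass (\<phi> \<circ> extend_state j k) N B))"
proof -
  have "neighbourhood_rate A * partial_mass \<phi> (Suc N) A =
      (\<Sum>j\<in>A \<inter> I. \<Sum>k\<in>A \<inter> K. \<Sum>B\<in>{A - {j, k}..A}. \<Sum>x\<in>states_upto N B.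
        \<phi> (extend_state j k x) * (neighbourhood_rate A * \<pi> (extend_state j k x)))"
    unfolding partial_mass_def sum_states_upto_Suc[OF A] sum_distrib_left
    by (simp only: mult.left_commute)
  also have "\<dots> = (\<Sum>j\<in>A \<inter> I. \<Sum>k\<in>A \<inter> K. \<Sum>B\<in>{A - {j, k}..A}. \<Sum>x\<in>states_upto N B.
        lam j * mu k * (\<phi> (extend_state j k x) * \<pi> x))"
  proof (intro sum.cong refl)
    fix j k B x
    assume jkBx: "j \<in> A \<inter> I" "k \<in> A \<inter> K" "B \<in> {A - {j, k}..A}" "x \<in> states_upto N B"
    then have "extend_state j k x \<in> states_on A"
      using extend_state_mem_states_upto[OF A] unfolding states_upto_def by blast
    moreover have "x \<in> states I K E" using jkBx(4) states_of_subset unfolding states_upto_def by blast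
    ultimately show "\<phi> (extend_state j k x) * (neighbourhood_rate A * \<pi> (extend_state j k x)) =
        lam j * mu k * (\<phi> (extend_state j k x) * \<pi> x)"
      using pi_extend_state[OF A] by simp
  qed
  finally show ?thesis
    by (simp only: partial_mass_def sum_distrib_left o_apply)
qed

lemma partial_mass_mono:
  assumes "\<And>x. \<phi> x \<le> \<phi>' x"
  shows "partial_mass \<phi> N B \<le> partial_mass \<phi>' N B"
  unfolding partial_mass_def using assms pi_nonneg by (intro sum_mono mult_right_mono) auto

lemma partial_mass_add: "partial_mass (\<lambda>x. \<phi> x + \<psi> x) N B = partial_mass \<phi> N B + partial_mass \<psi> N B"
  by (simp add: partial_mass_def distrib_right sum.distrib)

lemma partial_mass_le_Suc:
  assumes "\<And>x. 0 \<le> \<phi> x"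
  shows "partial_mass \<phi> N B \<le> partial_mass \<phi> (Suc N) B"
  unfolding partial_mass_def using assms pi_nonneg monoD[OF states_upto_mono, of N "Suc N"]
  by (intro sum_mono2 finite_states_upto mult_nonneg_nonneg) auto

lemma partial_mass_le_mass:
  assumes "\<And>x. 0 \<le> \<phi> x" and "(\<lambda>x. \<phi> x * \<pi> x) summable_on states_on B"
  shows "partial_mass \<phi> N B \<le> mass \<phi> B"
  unfolding partial_mass_def mass_def using assms pi_nonneg finite_states_upto
  by (intro finite_sum_le_infsum) (auto simp: states_upto_def)

lemma partial_mass_tendsto:
  assumes "(\<lambda>x. \<phi> x * \<pi> x) summable_on states_on B"
  shows "(\<lambda>N. partial_mass \<phi> N B) \<longlonglongrightarrow> mass \<phi> B"
proof -
  have "filterlim (\<lambda>N. states_upto N B) (finite_subsets_at_top (states_on B)) sequentially"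
    using states_upto_mono finite_states_upto states_upto_exhaust
    by (intro filterlim_exhaustion_finite_subsets) (auto simp: states_upto_def)
  then show ?thesis
    unfolding partial_mass_def mass_def
    by (rule filterlim_compose[OF has_sum_infsum[OF assms, unfolded has_sum_def]])
qed

lemma partial_mass_interval_le:
  assumes A: "A \<subseteq> I \<union> K"
    and \<phi>_nonneg: "\<And>x. 0 \<le> \<phi> x" and \<psi>_nonneg: "\<And>x. 0 \<le> \<psi> x"
    and \<phi>_extend: "\<And>x. \<phi> (extend_state j k x) \<le> \<phi> x + \<psi> x"
    and \<phi>_summable: "\<And>B. B \<subset> A \<Longrightarrow> (\<lambda>x. \<phi> x * \<pi> x) summable_on states_on B"
    and \<psi>_summable: "\<And>B. B \<subseteq> A \<Longrightarrow> (\<lambda>x. \<psi> x * \<pi> x) summable_on states_on B"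
  shows "(\<Sum>B\<in>{A - {j, k}..A}. partial_mass (\<phi> \<circ> extend_state j k) N B) \<le>
    partial_mass \<phi> (Suc N) A
    + ((\<Sum>B\<in>{A - {j, k}..A} - {A}. mass \<phi> B) + (\<Sum>B\<in>{A - {j, k}..A}. mass \<psi> B))"
proof -
  let ?Q = "{A - {j, k}..A}"
  have fin: "finite ?Q" using A by (rule finite_interval_Diff2)
  have "(\<Sum>B\<in>?Q. partial_mass (\<phi> \<circ> extend_state j k) N B) \<le>
      (\<Sum>B\<in>?Q. partial_mass \<phi> N B + partial_mass \<psi> N B)"
    using \<phi>_extend by (intro sum_mono) (simp add: partial_mass_add[symmetric] partial_mass_mono)
  also have "\<dots> = partial_mass \<phi> N A + (\<Sum>B\<in>?Q - {A}. partial_mass \<phi> N B)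
      + (\<Sum>B\<in>?Q. partial_mass \<psi> N B)"
    using sum.remove[OF fin, of A] by (simp add: sum.distrib)
  also have "\<dots> \<le> partial_mass \<phi> (Suc N) A + (\<Sum>B\<in>?Q - {A}. mass \<phi> B)
      + (\<Sum>B\<in>?Q. mass \<psi> B)"
  proof -
    have "(\<Sum>B\<in>?Q - {A}. partial_mass \<phi> N B) \<le> (\<Sum>B\<in>?Q - {A}. mass \<phi> B)"
      using \<phi>_nonneg \<phi>_summable by (intro sum_mono partial_mass_le_mass) auto
    moreover have "(\<Sum>B\<in>?Q. partial_mass \<psi> N B) \<le> (\<Sum>B\<in>?Q. mass \<psi> B)"
      using \<psi>_nonneg \<psi>_summable by (intro sum_mono partial_mass_le_mass) auto
    ultimately show ?thesis
      using partial_mass_le_Suc[where \<phi> = \<phi>, OF \<phi>_nonneg, of N A] by linarith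
  qed
  finally show ?thesis by simp
qed

lemma partial_mass_bounded:
  assumes A: "A \<in> Jfam I K E"
    and \<phi>_nonneg: "\<And>x. 0 \<le> \<phi> x" and \<psi>_nonneg: "\<And>x. 0 \<le> \<psi> x"
    and \<phi>_extend: "\<And>j k x. \<phi> (extend_state j k x) \<le> \<phi> x + \<psi> x"
    and \<phi>_summable: "\<And>B. B \<subset> A \<Longrightarrow> (\<lambda>x. \<phi> x * \<pi> x) summable_on states_on B"
    and \<psi>_summable: "\<And>B. B \<subseteq> A \<Longrightarrow> (\<lambda>x. \<psi> x * \<pi> x) summable_on states_on B"
  shows "bdd_above (range (\<lambda>N. partial_mass \<phi> N A))"
proof (rule bdd_aboveI2)
  define R where "R = (\<Sum>j\<in>A \<inter> I. \<Sum>k\<in>A \<inter> K. lam j * mu k *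
    ((\<Sum>B\<in>{A - {j, k}..A} - {A}. mass \<phi> B) + (\<Sum>B\<in>{A - {j, k}..A}. mass \<psi> B)))"
  fix N
  have "neighbourhood_rate A * partial_mass \<phi> (Suc N) A \<le>
      (\<Sum>j\<in>A \<inter> I. \<Sum>k\<in>A \<inter> K. lam j * mu k *
        (partial_mass \<phi> (Suc N) A + ((\<Sum>B\<in>{A - {j, k}..A} - {A}. mass \<phi> B)
          + (\<Sum>B\<in>{A - {j, k}..A}. mass \<psi> B))))"
    unfolding partial_mass_Suc[OF A]
    using partial_mass_interval_le[OF Jfam_subset[OF A] assms(2-6)] lam_nonneg mu_nonneg
    by (intro sum_mono mult_left_mono) auto
  also have "\<dots> = (\<Sum>j\<in>A \<inter> I. \<Sum>k\<in>A \<inter> K. lam j * mu k * partial_mass \<phi> (Suc N) A) + R"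
    by (simp add: R_def distrib_left sum.distrib)
  also have "\<dots> = sum lam (A \<inter> I) * sum mu (A \<inter> K) * partial_mass \<phi> (Suc N) A + R"
    by (simp add: sum_product sum_distrib_right[symmetric])
  finally have "Delta I K E lam mu A * partial_mass \<phi> (Suc N) A \<le> R"
    by (simp add: Delta_eq algebra_simps)
  then have "partial_mass \<phi> (Suc N) A \<le> R / Delta I K E lam mu A"
    using Delta_pos[OF A] by (simp add: pos_le_divide_eq mult.commute)
  then show "partial_mass \<phi> N A \<le> R / Delta I K E lam mu A"
    using partial_mass_le_Suc[where \<phi> = \<phi>, OF \<phi>_nonneg, of N A] by linarith
qed

lemma summable_weighted_pi:
  assumes \<phi>_nonneg: "\<And>x. 0 \<le> \<phi> x" and \<psi>_nonneg: "\<And>x. 0 \<le> \<psi> x"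
    and \<phi>_extend: "\<And>j k x. \<phi> (extend_state j k x) \<le> \<phi> x + \<psi> x"
    and \<psi>_summable: "\<And>B. B \<subseteq> I \<union> K \<Longrightarrow> (\<lambda>x. \<psi> x * \<pi> x) summable_on states_on B"
  shows "A \<subseteq> I \<union> K \<Longrightarrow> (\<lambda>x. \<phi> x * \<pi> x) summable_on states_on A"
proof (induction "card A" arbitrary: A rule: less_induct)
  case less
  show ?case
  proof (cases "A \<in> Jfam I K E")
    case False
    then have "finite (states_on A)"
      using states_of_not_Jfam[OF less.prems] finite_subset by blast
    then show ?thesis by (rule summable_on_finite)
  next
    case A: True
    have "finite A" using less.prems finite_I finite_K finite_subset by blast
    then have "(\<lambda>x. \<phi> x * \<pi> x) summable_on states_on B" if "B \<subset> A" for B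
      using less.hyps[OF psubset_card_mono[OF _ that]] that less.prems by blast
    moreover have "(\<lambda>x. \<psi> x * \<pi> x) summable_on states_on B" if "B \<subseteq> A" for B
      using \<psi>_summable that less.prems by blast
    ultimately obtain C where "partial_mass \<phi> N A \<le> C" for N
      using partial_mass_bounded[OF A \<phi>_nonneg \<psi>_nonneg \<phi>_extend] by (auto simp: bdd_above_def)
    then show ?thesis
      using \<phi>_nonneg pi_nonneg finite_states_upto states_upto_exhaust
      by (intro nonneg_summable_on_exhaustion[where T = "\<lambda>N. states_upto N A"])
        (auto simp: partial_mass_def states_upto_def)
  qed
qed

lemma summable_pi: "B \<subseteq> I \<union> K \<Longrightarrow> \<pi> summable_on states_on B"
  using summable_weighted_pi[where \<phi> = "\<lambda>_. 1" and \<psi> = "\<lambda>_. 0"] by simp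

lemma summable_count_pi:
  "B \<subseteq> I \<union> K \<Longrightarrow> (\<lambda>x. real (count_list (fst x) i) * \<pi> x) summable_on states_on B"
  by (rule summable_weighted_pi[where \<psi> = "\<lambda>_. 1"]) (simp_all add: summable_pi count_extend_state)

lemma mass_recursion:
  assumes A: "A \<in> Jfam I K E"
    and summable: "\<And>B. B \<subseteq> I \<union> K \<Longrightarrow> (\<lambda>x. \<phi> x * \<pi> x) summable_on states_on B"
    and summable_extend: "\<And>B j k. B \<subseteq> I \<union> K \<Longrightarrow>
      (\<lambda>x. (\<phi> \<circ> extend_state j k) x * \<pi> x) summable_on states_on B"
  shows "neighbourhood_rate A * mass \<phi> A =
    (\<Sum>j\<in>A \<inter> I. \<Sum>k\<in>A \<inter> K. lam j * mu k * (\<Sum>B\<in>{A - {j, k}..A}. mass (\<phi> \<circ> extend_state j k) B))"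
proof (rule LIMSEQ_unique)
  have sub: "A \<subseteq> I \<union> K" "\<And>X. A - X \<subseteq> I \<union> K" using Jfam_subset[OF A] by auto
  show "(\<lambda>N. neighbourhood_rate A * partial_mass \<phi> (Suc N) A) \<longlonglongrightarrow> neighbourhood_rate A * mass \<phi> A"
    by (intro tendsto_mult_left LIMSEQ_Suc partial_mass_tendsto summable sub)
  have "B \<subseteq> I \<union> K" if "B \<in> {A - {j, k}..A}" for B j k using that sub by auto
  then show "(\<lambda>N. neighbourhood_rate A * partial_mass \<phi> (Suc N) A) \<longlonglongrightarrow>
      (\<Sum>j\<in>A \<inter> I. \<Sum>k\<in>A \<inter> K. lam j * mu k * (\<Sum>B\<in>{A - {j, k}..A}. mass (\<phi> \<circ> extend_state j k) B))"
    unfolding partial_mass_Suc[OF A]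
    by (intro tendsto_sum tendsto_mult_left partial_mass_tendsto summable_extend) auto
qed

lemma pi_set_eq_mass: "B \<subseteq> I \<union> K \<Longrightarrow> pi_set I K E lam mu B = mass (\<lambda>_. 1) B"
  using states_of_not_J0fam[of B] by (simp add: pi_set_def mass_def)

lemma ell_eq_mass:
  "B \<subseteq> I \<union> K \<Longrightarrow> ell I K E lam mu i B = mass (\<lambda>x. real (count_list (fst x) i)) B"
  using states_of_not_J0fam[of B] by (simp add: ell_def mass_def)

lemma count_extend_state_mul_pi:
  "((\<lambda>x. real (count_list (fst x) i)) \<circ> extend_state j k) x * \<pi> x =
    real (count_list (fst x) i) * \<pi> x + of_bool (j = i) * \<pi> x"
  by (simp add: count_extend_state distrib_right)

lemma summable_count_extend_pi:
  assumes "B \<subseteq> I \<union> K"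
  shows "(\<lambda>x. ((\<lambda>x. real (count_list (fst x) i)) \<circ> extend_state j k) x * \<pi> x) summable_on states_on B"
  unfolding count_extend_state_mul_pi
  using summable_count_pi[OF assms] summable_pi[OF assms] by (intro summable_on_add summable_on_cmult_right)

lemma mass_count_extend_state:
  assumes "B \<subseteq> I \<union> K"
  shows "mass ((\<lambda>x. real (count_list (fst x) i)) \<circ> extend_state j k) B =
    ell I K E lam mu i B + of_bool (j = i) * pi_set I K E lam mu B"
proof -
  have "mass ((\<lambda>x. real (count_list (fst x) i)) \<circ> extend_state j k) B =
      mass (\<lambda>x. real (count_list (fst x) i)) B + (\<Sum>\<^sub>\<infinity>x\<in>states_on B. of_bool (j = i) * \<pi> x)"
    unfolding mass_def count_extend_state_mul_pi
    using summable_count_pi[OF assms] summable_pi[OF assms]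
    by (intro infsum_add summable_on_cmult_right)
  then show ?thesis
    using assms by (simp add: ell_eq_mass pi_set_eq_mass mass_def infsum_cmult_right')
qed

lemma ell_recursion:
  assumes A: "A \<in> Jfam I K E"
  shows "neighbourhood_rate A * ell I K E lam mu i A =
    (\<Sum>j\<in>A \<inter> I. \<Sum>k\<in>A \<inter> K. lam j * mu k *
      (\<Sum>B\<in>{A - {j, k}..A}. ell I K E lam mu i B + of_bool (j = i) * pi_set I K E lam mu B))"
proof -
  have sub: "B \<subseteq> I \<union> K" if "B \<in> {A - {j, k}..A}" for B j k
    using that Jfam_subset[OF A] by auto
  have "neighbourhood_rate A * ell I K E lam mu i A =
      (\<Sum>j\<in>A \<inter> I. \<Sum>k\<in>A \<inter> K. lam j * mu k *
        (\<Sum>B\<in>{A - {j, k}..A}. mass ((\<lambda>x. real (count_list (fst x) i)) \<circ> extend_state j k) B))"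
    unfolding ell_eq_mass[OF Jfam_subset[OF A]]
    using summable_count_pi summable_count_extend_pi by (rule mass_recursion[OF A])
  also have "\<dots> = (\<Sum>j\<in>A \<inter> I. \<Sum>k\<in>A \<inter> K. lam j * mu k *
      (\<Sum>B\<in>{A - {j, k}..A}. ell I K E lam mu i B + of_bool (j = i) * pi_set I K E lam mu B))"
    using sub by (intro sum.cong refl arg_cong2[where f = "(*)"] mass_count_extend_state) auto
  finally show ?thesis .
qed

lemma Delta_mul_ell:
  assumes A: "A \<in> Jfam I K E" and i: "i \<in> A \<inter> I"
  shows "Delta I K E lam mu A * ell I K E lam mu i A =
        lam i * sum mu (A \<inter> K) * (pi_set I K E lam mu A + pi_set I K E lam mu (A - {i}))
      + lam i * (\<Sum>k\<in>A \<inter> K. mu k * (pi_set I K E lam mu (A - {k}) + pi_set I K E lam mu (A - {i, k})))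
      + sum mu (A \<inter> K) * (\<Sum>j\<in>A \<inter> I. lam j * ell I K E lam mu i (A - {j}))
      + sum lam (A \<inter> I) * (\<Sum>k\<in>A \<inter> K. mu k * ell I K E lam mu i (A - {k}))
      + (\<Sum>j\<in>A \<inter> I. \<Sum>k\<in>A \<inter> K. lam j * mu k * ell I K E lam mu i (A - {j, k}))"
proof -
  have "A \<inter> I \<inter> (A \<inter> K) = {}" using disjoint_I_K by blast
  then have "neighbourhood_rate A * ell I K E lam mu i A =
      sum lam (A \<inter> I) * sum mu (A \<inter> K) * ell I K E lam mu i A
    + lam i * sum mu (A \<inter> K) * (pi_set I K E lam mu A + pi_set I K E lam mu (A - {i}))
    + lam i * (\<Sum>k\<in>A \<inter> K. mu k * (pi_set I K E lam mu (A - {k}) + pi_set I K E lam mu (A - {i, k})))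
    + sum mu (A \<inter> K) * (\<Sum>j\<in>A \<inter> I. lam j * ell I K E lam mu i (A - {j}))
    + sum lam (A \<inter> I) * (\<Sum>k\<in>A \<inter> K. mu k * ell I K E lam mu i (A - {k}))
    + (\<Sum>j\<in>A \<inter> I. \<Sum>k\<in>A \<inter> K. lam j * mu k * ell I K E lam mu i (A - {j, k}))"
    unfolding ell_recursion[OF A] using finite_I i by (intro double_sum_interval_Diff2) auto
  then show ?thesis
    by (simp add: Delta_eq left_diff_distrib)
qed

lemma meanL_eq_sum_ell: "meanL I K E lam mu i = (\<Sum>A\<in>J0fam I K E. ell I K E lam mu i A)"
proof -
  have "(\<Sum>A\<in>J0fam I K E. ell I K E lam mu i A) =
      (\<Sum>A\<in>J0fam I K E. \<Sum>\<^sub>\<infinity>x\<in>states_on A. real (count_list (fst x) i) * \<pi> x)"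
    using J0fam_subset by (simp add: ell_eq_mass mass_def)
  also have "\<dots> = (\<Sum>\<^sub>\<infinity>x\<in>(\<Union>A\<in>J0fam I K E. states_on A). real (count_list (fst x) i) * \<pi> x)"
    using finite_J0fam summable_count_pi J0fam_subset states_of_disjoint
    by (intro sum_infsum) auto
  finally show ?thesis
    by (simp add: meanL_def states_eq_UN_states_of)
qed

end

theorem proposition2:
  fixes I K :: "'a set" and E :: "'a \<Rightarrow> 'a \<Rightarrow> bool"
    and lam mu :: "'a \<Rightarrow> real" and i :: 'a
  assumes finI: "finite I" and finK: "finite K"
    and neI: "I \<noteq> {}" and neK: "K \<noteq> {}" and disj: "I \<inter> K = {}"
    and bip: "\<And>x y. E x y \<Longrightarrow> x \<in> I \<and> y \<in> K"
    and conn: "graph_connected I K E"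
    and lam_pos: "\<And>j. j \<in> I \<Longrightarrow> lam j > 0"
    and mu_pos: "\<And>k. k \<in> K \<Longrightarrow> mu k > 0"
    and lam_sum: "sum lam I = 1" and mu_sum: "sum mu K = 1"
    and stab: "\<And>A. A \<noteq> {} \<Longrightarrow> A \<subset> I \<Longrightarrow> sum lam A < sum mu (Kset K E A)"
    and iI: "i \<in> I"
  shows "meanL I K E lam mu i = (\<Sum>A\<in>J0fam I K E. ell I K E lam mu i A)
    \<and> (\<forall>A. i \<notin> A \<longrightarrow> ell I K E lam mu i A = 0)
    \<and> (\<forall>A\<in>Jfam I K E. i \<in> A \<longrightarrow>
      Delta I K E lam mu A * ell I K E lam mu i A =
        lam i * sum mu (A \<inter> K) * (pi_set I K E lam mu A + pi_set I K E lam mu (A - {i}))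
      + lam i * (\<Sum>k\<in>A \<inter> K. mu k * (pi_set I K E lam mu (A - {k}) + pi_set I K E lam mu (A - {i, k})))
      + sum mu (A \<inter> K) * (\<Sum>j\<in>A \<inter> I. lam j * ell I K E lam mu i (A - {j}))
      + sum lam (A \<inter> I) * (\<Sum>k\<in>A \<inter> K. mu k * ell I K E lam mu i (A - {k}))
      + (\<Sum>j\<in>A \<inter> I. \<Sum>k\<in>A \<inter> K. lam j * mu k * ell I K E lam mu i (A - {j, k})))"
proof -
  interpret matching_model I K E lam mu
    by (rule matching_model.intro) (fact assms)+
  show ?thesis
    using iI by (intro conjI allI ballI impI meanL_eq_sum_ell ell_eq_0_if_not_mem Delta_mul_ell) auto
qed

end
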